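(* Let $\epsilon\ge0$ be fixed. Suppose $\mathcal V$ is a convex body in $\mathbb R^d$ and $V_\epsilon$ lies in the interior of $\mathcal V$. Suppose $\theta(v)=\max(\eta(v),\theta_0)$ for a continuously differentiable $\eta:\mathcal V\to\mathbb R$ whose gradient norm $\|\nabla\eta(v)\|$ is bounded away from zero on $$\partial V_\epsilon=\{v\in\mathcal V:\theta(v)-\theta_0=\eta(v)-\theta_0=\epsilon\}.$$ Then there exists $d_0>0$ such that, for all $v\notin V_\epsilon$, $$\theta(v)-\theta_0-\epsilon\ge\big(c\,d(v,V_\epsilon)\big)\wedge\delta,$$ with $$c=\tfrac12\inf_{v\in\partial V_\epsilon}\|\nabla\eta(v)\|>0,\qquad\delta=\inf_{d(v,V_\epsilon)\ge d_0}\big(\eta(v)-\theta_0-\epsilon\big)>0.$$ In other words, Condition V.2 holds with degree of identifiability $\rho(\epsilon)=1$.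
   Context: $\theta:\mathcal V\to\mathbb R$ has minimum value $\theta_0=\inf_{v\in\mathcal V}\theta(v)$. Put $V_\epsilon=\{v\in\mathcal V:\theta(v)\le\theta_0+\epsilon\}$ and $d(v,A)=\inf_{v'\in A}\|v-v'\|$. Condition V.2 means: there exist positive constants $\rho(\epsilon),c,\delta$ such that $\theta(v)-\theta_0-\epsilon\ge(c\,d(v,V_\epsilon))^{\rho(\epsilon)}\wedge\delta$ for all $v\notin V_\epsilon$. *)

theory Defs
  imports "HOL-Analysis.Analysis"
begin

definition theta_min :: "('a \<Rightarrow> real) \<Rightarrow> 'a set \<Rightarrow> real" where
  "theta_min \<theta> V = Inf (\<theta> ` V)"

definition sublevel :: "('a \<Rightarrow> real) \<Rightarrow> 'a set \<Rightarrow> real \<Rightarrow> 'a set" where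
  "sublevel \<theta> V \<epsilon> = {v \<in> V. \<theta> v \<le> theta_min \<theta> V + \<epsilon>}"

text \<open>The set called the boundary of V_eps in the paper:
  {v in V. theta v - theta_0 = eta v - theta_0 = eps}.\<close>
definition level_bd :: "('a \<Rightarrow> real) \<Rightarrow> ('a \<Rightarrow> real) \<Rightarrow> 'a set \<Rightarrow> real \<Rightarrow> 'a set" where
  "level_bd \<theta> \<eta> V \<epsilon> =
     {v \<in> V. \<theta> v - theta_min \<theta> V = \<epsilon> \<and> \<eta> v - theta_min \<theta> V = \<epsilon>}"

end

theory Submission
  imports Defs
begin

(* Put a = theta_0 + eps.  Since eps >= 0, the sublevel set V_eps is {eta <= a}, its
   "boundary" is the level set {eta = a}, and theta = eta outside V_eps (sublevel_max_eq).
   So the theorem is an instance of a statement about the sublevel set L = {eta <= a} of a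
   C^1 function on a convex body (linear_growth_off_sublevel), proved in two regimes:

   Near L (linear_growth_near_sublevel): a point v with eta v > a close to L is joined by a
   segment to a point of L, which crosses the level set at some p.  The gradient at p has
   norm >= 2c and, by uniform continuity, moves by at most c/2 on balls of a uniform radius;
   walking from v a distance (eta v - a)/c against the gradient at p therefore reaches L,
   so c d(v, L) <= eta v - a (descent_along_gradient, linear_growth_near_level).

   Far from L (gap_away_from_sublevel): on the compact region {d(v, L) >= d0} the continuous
   function eta - a is positive, so it is bounded below by its positive infimum delta. *)

lemma descent_along_gradient:
  fixes \<eta> :: "'a::euclidean_space \<Rightarrow> real" and g :: "'a \<Rightarrow> 'a"
  assumes der: "\<forall>x\<in>ball p r. (\<eta> has_derivative (\<lambda>h. g x \<bullet> h)) (at x)"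
    and gc: "\<forall>x\<in>ball p r. norm (g x - g p) \<le> c/2"
    and gp: "2 * c \<le> norm (g p)" and c: "c > 0"
    and vp: "dist v p < r/2" and S: "0 \<le> S" "S \<le> r/2"
  shows "\<eta> (v - S *\<^sub>R (g p /\<^sub>R norm (g p))) \<le> \<eta> v - c * S"
proof -
  define n where "n = g p /\<^sub>R norm (g p)"
  have gp0: "norm (g p) > 0" using gp c by linarith
  have nn: "norm n = 1" using gp0 by (simp add: n_def)
  have gpn: "g p \<bullet> n = norm (g p)" using gp0
    by (simp add: n_def inner_commute power2_norm_eq_inner[symmetric] power2_eq_square)
  text \<open>\<open>F\<close> is non-increasing on \<open>[0, S]\<close> because its derivative \<open>c - g u \<bullet> n\<close> is \<open>\<le> 0\<close>.\<close>
  define F where "F s = \<eta> (v - s *\<^sub>R n) + c * s" for s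
  have "F S \<le> F 0"
  proof (rule DERIV_nonpos_imp_nonincreasing[OF S(1)])
    fix x assume x: "0 \<le> x" "x \<le> S"
    let ?u = "v - x *\<^sub>R n"
    have "dist p ?u \<le> dist p v + dist v ?u" by (rule dist_triangle)
    also have "dist v ?u = x" using nn x by (simp add: dist_norm)
    finally have ub: "?u \<in> ball p r" using vp x S by (simp add: dist_commute)
    have d1: "((\<lambda>s. v - s *\<^sub>R n) has_derivative (\<lambda>h. - (h *\<^sub>R n))) (at x)"
      by (auto intro!: derivative_eq_intros)
    have d2: "((\<lambda>s. \<eta> (v - s *\<^sub>R n)) has_derivative (\<lambda>h. g ?u \<bullet> (- (h *\<^sub>R n)))) (at x)"
      using has_derivative_compose[OF d1, of \<eta> "\<lambda>h. g ?u \<bullet> h"] der ub by blast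
    have d3: "(F has_derivative (\<lambda>h. g ?u \<bullet> (- (h *\<^sub>R n)) + c * h)) (at x)"
      unfolding F_def by (auto intro!: derivative_eq_intros d2)
    have "DERIV F x :> (c - g ?u \<bullet> n)"
      unfolding has_field_derivative_def
      by (rule has_derivative_eq_rhs[OF d3]) (auto simp: algebra_simps)
    moreover have "c - g ?u \<bullet> n \<le> 0"
    proof -
      have "g ?u \<bullet> n = g p \<bullet> n + (g ?u - g p) \<bullet> n" by (simp add: algebra_simps)
      moreover have "\<bar>(g ?u - g p) \<bullet> n\<bar> \<le> norm (g ?u - g p) * norm n"
        by (rule Cauchy_Schwarz_ineq2)
      moreover have "norm (g ?u - g p) \<le> c/2" using gc ub by auto
      ultimately show ?thesis using gpn nn gp by auto
    qed
    ultimately show "\<exists>y. DERIV F x :> y \<and> y \<le> 0" by blast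
  qed
  then show ?thesis by (simp add: F_def n_def)
qed

lemma linear_growth_near_level:
  fixes \<eta> :: "'a::euclidean_space \<Rightarrow> real" and g :: "'a \<Rightarrow> 'a"
  assumes ball: "ball p r \<subseteq> V"
    and der: "\<forall>x\<in>ball p r. (\<eta> has_derivative (\<lambda>h. g x \<bullet> h)) (at x)"
    and gc: "\<forall>x\<in>ball p r. norm (g x - g p) \<le> c/2"
    and gp: "2 * c \<le> norm (g p)" and c: "c > 0"
    and p: "\<eta> p \<le> a" and vp: "dist v p < r/2" and va: "a \<le> \<eta> v"
  shows "c * infdist v {x\<in>V. \<eta> x \<le> a} \<le> \<eta> v - a"
proof -
  let ?L = "{x\<in>V. \<eta> x \<le> a}"
  have "0 < r" using vp zero_le_dist[of v p] by linarith
  then have pL: "p \<in> ?L" using ball p by auto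
  show ?thesis
  proof (cases "c * (r/2) \<le> \<eta> v - a")
    case True
    have "infdist v ?L \<le> r/2" using infdist_le[OF pL, of v] vp by linarith
    then have "c * infdist v ?L \<le> c * (r/2)" using c by (simp add: mult_left_mono)
    with True show ?thesis by linarith
  next
    case False
    define S where "S = (\<eta> v - a) / c"
    have S: "0 \<le> S" "S \<le> r/2" using False c va by (auto simp: S_def field_simps)
    define u where "u = v - S *\<^sub>R (g p /\<^sub>R norm (g p))"
    have "\<eta> u \<le> \<eta> v - c * S"
      unfolding u_def by (rule descent_along_gradient[OF der gc gp c vp S])
    then have ua: "\<eta> u \<le> a" using c by (simp add: S_def)
    have "norm (g p) > 0" using gp c by linarith
    then have duv: "dist v u = S" using S by (simp add: u_def dist_norm)
    have "dist p u \<le> dist p v + dist v u" by (rule dist_triangle)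
    then have "u \<in> ball p r" using vp S duv by (simp add: dist_commute)
    then have "u \<in> ?L" using ball ua by auto
    then have "infdist v ?L \<le> S" using infdist_le duv by metis
    then show ?thesis using c by (simp add: S_def field_simps)
  qed
qed

lemma level_crossing_on_segment:
  fixes \<eta> :: "'a::real_normed_vector \<Rightarrow> real"
  assumes "convex V" "continuous_on V \<eta>" "w \<in> V" "v \<in> V" "\<eta> w \<le> a" "a \<le> \<eta> v"
  obtains p where "p \<in> closed_segment w v" "\<eta> p = a"
proof -
  have seg: "closed_segment w v \<subseteq> V" by (rule closed_segment_subset[OF assms(3,4,1)])
  have conn: "connected (\<eta> ` closed_segment w v)"
    by (rule connected_continuous_image[OF continuous_on_subset[OF assms(2) seg] connected_segment])
  have "a \<in> \<eta> ` closed_segment w v"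
    by (rule connectedD_interval[OF conn, of "\<eta> w" "\<eta> v"]) (use assms(5,6) in auto)
  then show ?thesis using that by blast
qed

lemma uniform_radius_around_compact:
  fixes g :: "'a::metric_space \<Rightarrow> 'b::real_normed_vector"
  assumes V: "compact V" "continuous_on V g"
    and L: "compact L" "L \<subseteq> interior V" and e: "e > 0"
  obtains r where "r > 0" "\<And>p. p \<in> L \<Longrightarrow> ball p r \<subseteq> interior V"
    "\<And>p x. p \<in> L \<Longrightarrow> x \<in> ball p r \<Longrightarrow> norm (g x - g p) \<le> e"
proof -
  obtain r1 where r1: "r1 > 0" "(\<Union>x\<in>L. ball x r1) \<subseteq> interior V"
    using compact_subset_open_imp_ball_epsilon_subset[OF L(1) open_interior L(2)] by blast
  have "uniformly_continuous_on V g" by (rule compact_uniformly_continuous[OF V(2,1)])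
  then obtain r2 where r2: "r2 > 0" "\<forall>x\<in>V. \<forall>x'\<in>V. dist x' x < r2 \<longrightarrow> dist (g x') (g x) < e"
    unfolding uniformly_continuous_on_def using e by blast
  have balls: "ball p (min r1 r2) \<subseteq> interior V" if "p \<in> L" for p
    using r1(2) that by fastforce
  show ?thesis
  proof (rule that[of "min r1 r2"])
    fix p x assume p: "p \<in> L" and x: "x \<in> ball p (min r1 r2)"
    have "x \<in> V" using balls[OF p] x interior_subset by blast
    moreover have "p \<in> V" using p L(2) interior_subset by blast
    moreover have "dist x p < r2" using x by (simp add: dist_commute)
    ultimately have "dist (g x) (g p) < e" using r2(2) by blast
    then show "norm (g x - g p) \<le> e" by (simp add: dist_norm)
  qed (use r1(1) r2(1) balls in auto)
qed

lemma compact_preimage_on: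
  fixes f :: "'a::t2_space \<Rightarrow> 'b::topological_space"
  assumes "compact V" "continuous_on V f" "closed S"
  shows "compact {v\<in>V. f v \<in> S}"
proof -
  have "closed (f -` S \<inter> V)"
    using closed_vimage_Int[OF assms(3,2) compact_imp_closed[OF assms(1)]] .
  moreover have "{v\<in>V. f v \<in> S} = V \<inter> (f -` S \<inter> V)" by auto
  ultimately show ?thesis using compact_Int_closed[OF assms(1)] by simp
qed

lemma Inf_image_pos:
  fixes f :: "'a \<Rightarrow> real"
  assumes "K \<noteq> {}" "\<exists>m>0. \<forall>v\<in>K. m \<le> f v"
  shows "Inf (f ` K) > 0" and "\<And>v. v \<in> K \<Longrightarrow> Inf (f ` K) \<le> f v"
proof -
  obtain m where m: "m > 0" "\<forall>v\<in>K. m \<le> f v" using assms(2) by blast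
  have "m \<le> Inf (f ` K)" by (rule cINF_greatest) (use assms(1) m in auto)
  then show "Inf (f ` K) > 0" using m(1) by linarith
  show "Inf (f ` K) \<le> f v" if "v \<in> K" for v
    by (rule cINF_lower) (use that m in \<open>auto intro: bdd_belowI[where m=m]\<close>)
qed

text \<open>A continuous positive function on a nonempty compact set has a positive infimum, since
  the infimum is attained.\<close>
lemma compact_Inf_image_pos:
  fixes f :: "'a::topological_space \<Rightarrow> real"
  assumes "compact D" "D \<noteq> {}" "continuous_on D f" "\<And>x. x \<in> D \<Longrightarrow> f x > 0"
  shows "Inf (f ` D) > 0" and "\<And>x. x \<in> D \<Longrightarrow> Inf (f ` D) \<le> f x"
proof -
  obtain x0 where x0: "x0 \<in> D" "\<forall>y\<in>D. f x0 \<le> f y"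
    using continuous_attains_inf[OF assms(1-3)] by blast
  then have "\<exists>m>0. \<forall>x\<in>D. m \<le> f x" using assms(4) by blast
  then show "Inf (f ` D) > 0" and "\<And>x. x \<in> D \<Longrightarrow> Inf (f ` D) \<le> f x"
    using Inf_image_pos[OF assms(2)] by blast+
qed

text \<open>A nonempty compact set in a Euclidean space is not open, so it has a point outside
  its interior.\<close>
lemma compact_not_subset_interior:
  fixes V :: "'a::euclidean_space set"
  assumes "compact V" "V \<noteq> {}"
  obtains v where "v \<in> V" "v \<notin> interior V"
proof -
  have "V \<noteq> UNIV" using assms(1) compact_imp_bounded not_bounded_UNIV by metis
  then have "frontier V \<noteq> {}" using assms(2) frontier_eq_empty by blast
  moreover have "frontier V \<subseteq> V" by (simp add: assms(1) compact_imp_closed frontier_subset_closed)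
  ultimately show ?thesis using that by (auto simp: frontier_def)
qed

section \<open>Linear growth off a sublevel set\<close>

lemma linear_growth_near_sublevel:
  fixes V :: "'a::euclidean_space set" and \<eta> :: "'a \<Rightarrow> real" and g :: "'a \<Rightarrow> 'a"
  assumes V: "compact V" "convex V"
    and L: "L = {v\<in>V. \<eta> v \<le> a}" "L \<subseteq> interior V" "L \<noteq> {}"
    and deriv: "\<forall>v\<in>V. (\<eta> has_derivative (\<lambda>h. g v \<bullet> h)) (at v within V)"
    and C1: "continuous_on V g"
    and c: "c > 0" "\<forall>p\<in>V. \<eta> p = a \<longrightarrow> 2 * c \<le> norm (g p)"
  obtains r where "r > 0"
    "\<And>v. v \<in> V \<Longrightarrow> a \<le> \<eta> v \<Longrightarrow> infdist v L < r \<Longrightarrow> c * infdist v L \<le> \<eta> v - a"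
proof -
  have eta_cont: "continuous_on V \<eta>"
    using deriv has_derivative_continuous continuous_on_eq_continuous_within by blast
  have "compact L" using compact_preimage_on[OF V(1) eta_cont, of "{..a}"] by (simp add: L(1))
  then obtain r where r: "r > 0" "\<And>p. p \<in> L \<Longrightarrow> ball p r \<subseteq> interior V"
    "\<And>p x. p \<in> L \<Longrightarrow> x \<in> ball p r \<Longrightarrow> norm (g x - g p) \<le> c/2"
    using uniform_radius_around_compact[OF V(1) C1 _ L(2), of "c/2"] c(1) by auto
  show ?thesis
  proof (rule that[of "r/2"])
    fix v assume v: "v \<in> V" "a \<le> \<eta> v" "infdist v L < r/2"
    have "Inf ((\<lambda>x. dist v x) ` L) < r/2" using v(3) L(3) by (simp add: infdist_notempty)
    then obtain w where w: "w \<in> L" "dist v w < r/2"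
      using cInf_lessD[of "(\<lambda>x. dist v x) ` L" "r/2"] L(3) by blast
    obtain p where p: "p \<in> closed_segment w v" "\<eta> p = a"
      using level_crossing_on_segment[OF V(2) eta_cont, of w v a] w(1) v L(1) by auto
    have pL: "p \<in> L" using p closed_segment_subset[OF _ v(1) V(2), of w] w(1) L(1) by auto
    have "dist v p \<le> dist v w"
      using dist_in_closed_segment[OF p(1)] by (simp add: dist_commute)
    then have vp: "dist v p < r/2" using w(2) by linarith
    have ball: "ball p r \<subseteq> V" using r(2)[OF pL] interior_subset by blast
    have der: "\<forall>x\<in>ball p r. (\<eta> has_derivative (\<lambda>h. g x \<bullet> h)) (at x)"
      using r(2)[OF pL] deriv interior_subset at_within_interior by (metis subsetD)
    show "c * infdist v L \<le> \<eta> v - a"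
      unfolding L(1)
      by (rule linear_growth_near_level[OF ball der _ _ c(1) _ vp v(2)])
        (use r(3)[OF pL] c(2) p pL L(1) in auto)
  qed (use r(1) in simp)
qed

lemma gap_away_from_sublevel:
  fixes \<eta> :: "'a::metric_space \<Rightarrow> real"
  assumes V: "compact V" "continuous_on V \<eta>"
    and L: "L = {v\<in>V. \<eta> v \<le> a}"
    and D: "D = {v\<in>V. infdist v L \<ge> d0}" "d0 > 0" "D \<noteq> {}"
  shows "Inf ((\<lambda>v. \<eta> v - a) ` D) > 0" and "\<And>v. v \<in> D \<Longrightarrow> Inf ((\<lambda>v. \<eta> v - a) ` D) \<le> \<eta> v - a"
proof -
  have "compact D"
    using compact_preimage_on[OF V(1) continuous_on_infdist[OF continuous_on_id], of "{d0..}" L]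
    by (simp add: D(1))
  moreover have "continuous_on D (\<lambda>v. \<eta> v - a)"
    by (intro continuous_intros continuous_on_subset[OF V(2)]) (auto simp: D(1))
  moreover have "\<eta> v - a > 0" if "v \<in> D" for v
  proof -
    have "v \<notin> L" using that D(1,2) by auto
    then show ?thesis using that D(1) L by auto
  qed
  ultimately show "Inf ((\<lambda>v. \<eta> v - a) ` D) > 0"
    and "\<And>v. v \<in> D \<Longrightarrow> Inf ((\<lambda>v. \<eta> v - a) ` D) \<le> \<eta> v - a"
    using compact_Inf_image_pos[of D "\<lambda>v. \<eta> v - a"] D(3) by blast+
qed

lemma linear_growth_off_sublevel:
  fixes V :: "'a::euclidean_space set" and \<eta> :: "'a \<Rightarrow> real" and g :: "'a \<Rightarrow> 'a"
  assumes V: "compact V" "convex V"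
    and L: "L = {v\<in>V. \<eta> v \<le> a}" "L \<subseteq> interior V" "L \<noteq> {}" "L \<noteq> V"
    and K: "K = {v\<in>V. \<eta> v = a}"
    and deriv: "\<forall>v\<in>V. (\<eta> has_derivative (\<lambda>h. g v \<bullet> h)) (at v within V)"
    and C1: "continuous_on V g"
    and grad: "\<exists>m>0. \<forall>v\<in>K. m \<le> norm (g v)"
  shows "\<exists>d0>0.
    (let c = Inf ((\<lambda>v. norm (g v)) ` K) / 2;
         \<delta> = Inf ((\<lambda>v. \<eta> v - a) ` {v \<in> V. infdist v L \<ge> d0})
     in c > 0 \<and> {v \<in> V. infdist v L \<ge> d0} \<noteq> {} \<and> \<delta> > 0 \<and>
        (\<forall>v \<in> V - L. \<eta> v - a \<ge> min (c * infdist v L) \<delta>))"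
proof -
  define c where "c = Inf ((\<lambda>v. norm (g v)) ` K) / 2"
  have eta_cont: "continuous_on V \<eta>"
    using deriv has_derivative_continuous continuous_on_eq_continuous_within by blast
  text \<open>The level set is nonempty, as \<open>\<eta>\<close> takes values on both sides of \<open>a\<close>.\<close>
  obtain w v1 where "w \<in> L" "v1 \<in> V - L" using L(1,3,4) by blast
  then have w: "w \<in> V" "\<eta> w \<le> a" and v1: "v1 \<in> V" "v1 \<notin> L" "a \<le> \<eta> v1"
    using L(1) by auto
  obtain p where "p \<in> closed_segment w v1" "\<eta> p = a"
    using level_crossing_on_segment[OF V(2) eta_cont w(1) v1(1) w(2) v1(3)] .
  then have "K \<noteq> {}" using closed_segment_subset[OF w(1) v1(1) V(2)] K by auto
  then have c_pos: "c > 0" and gK: "\<forall>p\<in>V. \<eta> p = a \<longrightarrow> 2 * c \<le> norm (g p)"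
    using Inf_image_pos[of K "\<lambda>v. norm (g v)"] grad K by (auto simp: c_def)
  text \<open>Near regime up to distance \<open>r\<close>; the far regime starts at \<open>d0 \<le> r\<close>, chosen so small
    that it still contains \<open>v1\<close>.\<close>
  obtain r where r: "r > 0"
    "\<And>v. v \<in> V \<Longrightarrow> a \<le> \<eta> v \<Longrightarrow> infdist v L < r \<Longrightarrow> c * infdist v L \<le> \<eta> v - a"
    using linear_growth_near_sublevel[OF V L(1,2,3) deriv C1 c_pos gK] by blast
  have "closed L"
    using compact_preimage_on[OF V(1) eta_cont, of "{..a}"] compact_imp_closed by (simp add: L(1))
  define d0 where "d0 = min r (infdist v1 L)"
  define D where "D = {v \<in> V. infdist v L \<ge> d0}"
  have d0: "d0 > 0"
    using r(1) infdist_pos_not_in_closed[OF \<open>closed L\<close> L(3) v1(2)] by (simp add: d0_def)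
  have D_ne: "D \<noteq> {}" using v1(1) by (auto simp: D_def d0_def)
  note \<delta> = gap_away_from_sublevel[OF V(1) eta_cont L(1) D_def d0 D_ne]
  have growth: "\<forall>v \<in> V - L. \<eta> v - a \<ge> min (c * infdist v L) (Inf ((\<lambda>v. \<eta> v - a) ` D))"
  proof
    fix v assume v: "v \<in> V - L"
    show "\<eta> v - a \<ge> min (c * infdist v L) (Inf ((\<lambda>v. \<eta> v - a) ` D))"
    proof (cases "infdist v L < d0")
      case True
      then have "c * infdist v L \<le> \<eta> v - a" using r(2)[of v] v L(1) by (auto simp: d0_def)
      then show ?thesis by linarith
    next
      case False
      then have "v \<in> D" using v by (simp add: D_def)
      then show ?thesis using \<delta>(2)[of v] by linarith
    qed
  qed
  show ?thesis
    unfolding Let_def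
    by (intro exI[of _ d0] conjI) (use d0 c_pos D_ne \<delta>(1) growth in \<open>simp_all add: c_def D_def\<close>)
qed

section \<open>Reduction of the theorem to the sublevel sets of \<open>\<eta>\<close>\<close>

lemma sublevel_max_eq:
  assumes "\<epsilon> \<ge> 0" "\<forall>v\<in>V. \<theta> v = max (\<eta> v) (theta_min \<theta> V)"
  shows "sublevel \<theta> V \<epsilon> = {v\<in>V. \<eta> v \<le> theta_min \<theta> V + \<epsilon>}"
    and "level_bd \<theta> \<eta> V \<epsilon> = {v\<in>V. \<eta> v = theta_min \<theta> V + \<epsilon>}"
    and "\<And>v. v \<in> V - sublevel \<theta> V \<epsilon> \<Longrightarrow> \<theta> v = \<eta> v"
proof -
  define t0 where "t0 = theta_min \<theta> V"
  have th: "\<And>v. v \<in> V \<Longrightarrow> \<theta> v = max (\<eta> v) t0" using assms(2) by (simp add: t0_def)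
  show "sublevel \<theta> V \<epsilon> = {v\<in>V. \<eta> v \<le> theta_min \<theta> V + \<epsilon>}"
    unfolding sublevel_def t0_def[symmetric] using th assms(1) by auto
  show "level_bd \<theta> \<eta> V \<epsilon> = {v\<in>V. \<eta> v = theta_min \<theta> V + \<epsilon>}"
    unfolding level_bd_def t0_def[symmetric] using th assms(1) by auto
  show "\<theta> v = \<eta> v" if "v \<in> V - sublevel \<theta> V \<epsilon>" for v
    using that th assms(1) unfolding sublevel_def t0_def[symmetric] by fastforce
qed

text \<open>On a compact set the minimum value of a continuous function is attained, so every
  sublevel set with \<open>\<epsilon> \<ge> 0\<close> is nonempty.\<close>
lemma sublevel_nonempty:
  assumes "compact V" "V \<noteq> {}" "continuous_on V \<theta>" "\<epsilon> \<ge> 0"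
  shows "sublevel \<theta> V \<epsilon> \<noteq> {}"
proof -
  obtain v0 where v0: "v0 \<in> V" "\<forall>y\<in>V. \<theta> v0 \<le> \<theta> y"
    using continuous_attains_inf[OF assms(1-3)] by blast
  have "theta_min \<theta> V = \<theta> v0" unfolding theta_min_def
    by (rule cInf_eq_minimum) (use v0 in auto)
  then show ?thesis using v0(1) assms(4) by (auto simp: sublevel_def)
qed

theorem lemma8:
  fixes V :: "'a::euclidean_space set"
    and \<theta> \<eta> :: "'a \<Rightarrow> real"
    and g :: "'a \<Rightarrow> 'a"
    and \<epsilon> :: real
  assumes eps: "\<epsilon> \<ge> 0"
    and body: "compact V" "convex V" "interior V \<noteq> {}"
    and inside: "sublevel \<theta> V \<epsilon> \<subseteq> interior V"
    and theta: "\<forall>v\<in>V. \<theta> v = max (\<eta> v) (theta_min \<theta> V)"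
    and deriv: "\<forall>v\<in>V. (\<eta> has_derivative (\<lambda>h. g v \<bullet> h)) (at v within V)"
    and C1: "continuous_on V g"
    and grad: "\<exists>m>0. \<forall>v\<in>level_bd \<theta> \<eta> V \<epsilon>. m \<le> norm (g v)"
  shows "\<exists>d0>0.
    (let \<theta>\<^sub>0 = theta_min \<theta> V;
         V\<^sub>\<epsilon> = sublevel \<theta> V \<epsilon>;
         c = Inf ((\<lambda>v. norm (g v)) ` level_bd \<theta> \<eta> V \<epsilon>) / 2;
         \<delta> = Inf ((\<lambda>v. \<eta> v - \<theta>\<^sub>0 - \<epsilon>) ` {v \<in> V. infdist v V\<^sub>\<epsilon> \<ge> d0})
     in c > 0 \<and> {v \<in> V. infdist v V\<^sub>\<epsilon> \<ge> d0} \<noteq> {} \<and> \<delta> > 0 \<and>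
        (\<forall>v \<in> V - V\<^sub>\<epsilon>. \<theta> v - \<theta>\<^sub>0 - \<epsilon> \<ge> min (c * infdist v V\<^sub>\<epsilon>) \<delta>))"
proof -
  have V_ne: "V \<noteq> {}" using body(3) interior_subset by blast
  have "continuous_on V \<eta>"
    using deriv has_derivative_continuous continuous_on_eq_continuous_within by blast
  then have "continuous_on V (\<lambda>v. max (\<eta> v) (theta_min \<theta> V))" by (intro continuous_intros)
  then have "continuous_on V \<theta>" by (rule continuous_on_eq) (simp add: theta)
  then have Ve_ne: "sublevel \<theta> V \<epsilon> \<noteq> {}" using sublevel_nonempty body(1) V_ne eps by blast
  text \<open>\<open>V\<^sub>\<epsilon>\<close> lies in the interior, which misses some point of the compact body.\<close>
  obtain v where "v \<in> V" "v \<notin> interior V" using compact_not_subset_interior body(1) V_ne by blast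
  then have Ve_proper: "sublevel \<theta> V \<epsilon> \<noteq> V" using inside by blast
  text \<open>Apply the result for \<open>\<eta>\<close> at level \<open>\<theta>\<^sub>0 + \<epsilon>\<close>; outside \<open>V\<^sub>\<epsilon>\<close> the excesses agree.\<close>
  from linear_growth_off_sublevel[OF body(1,2) sublevel_max_eq(1)[OF eps theta] inside Ve_ne
      Ve_proper sublevel_max_eq(2)[OF eps theta] deriv C1 grad]
  show ?thesis using sublevel_max_eq(3)[OF eps theta] by (simp add: Let_def diff_diff_eq)
qed

end
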